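(* Let $\Phi$ be any positive, trace-preserving linear map on the hermitian $2\times2$ matrices, written as $$\Phi\big(\tfrac12(x_0I+\vec x\cdot\vec\sigma)\big)=\tfrac12\big(x_0 I+(x_0\vec t+\Lambda\vec x)\cdot\vec\sigma\big)$$ for some real $3\times3$ matrix $\Lambda$ and some $\vec t\in\mathbb{R}^3$. For $w\in\mathbb{R}$ consider the quadratic form $$q^\Phi_w(\mathbf{x})=\Phi(\mathbf{x})\cdot\Phi(\mathbf{x})-w\,\mathbf{x}\cdot\mathbf{x}.$$ Its matrix is $$Q^\Phi_w=\begin{pmatrix}1-|\vec t|^2-w & -\vec t^{\,T}\Lambda\\ -(\vec t^{\,T}\Lambda)^T & w I_3-\Lambda^T\Lambda\end{pmatrix}.$$ Then there exists a unique $w_0\in\mathbb{R}$ with the following three properties: - $Q^\Phi_{w_0}$ is positive semidefinite; - $Q^\Phi_{w_0}$ is degenerate; - $\ker Q^\Phi_{w_0}$ contains a non-zero vector $\mathbf{n}$ with $\mathbf{n}\cdot\mathbf{n}\le 0$. For this $w_0$, the concurrence of $\Phi$ satisfies $C_\Phi(\rho)=\sqrt{q^\Phi_{w_0}(\mathbf{x})}$ for every state $\rho=\tfrac12(I+\vec x\cdot\vec\sigma)$, where $\mathbf{x}=(1,\vec x)$.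
   Context: Hermitian $2\times2$ matrices are identified with Minkowski space $\mathbb{R}^{1,3}$ via $\mathbf{x}=(x_0,\vec x)\leftrightarrow\rho=\tfrac12(x_0I+\vec x\cdot\vec\sigma)$, where $\vec\sigma$ are the Pauli matrices. The Minkowski product is $\mathbf{x}\cdot\mathbf{y}=x_0y_0-\vec x\cdot\vec y$, so that $4\det\rho=\mathbf{x}\cdot\mathbf{x}$. We write $\Phi(\mathbf{x})$ for the vector corresponding to $\Phi(\rho)$. For a positive trace-preserving map $\Phi$ into $2\times 2$ matrices, the concurrence is defined as follows. For a pure state $\pi$, $C_\Phi(\pi)=2\sqrt{\det\Phi(\pi)}$. For a general state, $$C_\Phi(\rho)=\min\sum_j p_j C_\Phi(\pi_j),$$ where the minimum is over all decompositions $\rho=\sum_j p_j\pi_j$ into pure states with $p_j>0$ and $\sum p_j=1$. *)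

theory Defs
  imports "HOL-Analysis.Analysis"
begin

type_synonym mvec = "real \<times> (real^3)"

definition mink :: "mvec \<Rightarrow> mvec \<Rightarrow> real" where
  "mink x y = fst x * fst y - snd x \<bullet> snd y"

definition PhiM :: "real^3^3 \<Rightarrow> real^3 \<Rightarrow> mvec \<Rightarrow> mvec" where
  "PhiM Lam t x = (fst x, fst x *\<^sub>R t + Lam *v snd x)"

definition sigma1 :: "complex^2^2" where
  "sigma1 = (\<chi> i j. if i = j then 0 else 1)"

definition sigma2 :: "complex^2^2" where
  "sigma2 = (\<chi> i j. if i = j then 0 else if i = 1 then - \<i> else \<i>)"

definition sigma3 :: "complex^2^2" where
  "sigma3 = (\<chi> i j. if i \<noteq> j then 0 else if i = 1 then 1 else -1)"

definition hmat :: "mvec \<Rightarrow> complex^2^2" where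
  "hmat x = (1/2) *\<^sub>R (fst x *\<^sub>R mat 1 + (snd x $ 1) *\<^sub>R sigma1
                + (snd x $ 2) *\<^sub>R sigma2 + (snd x $ 3) *\<^sub>R sigma3)"

text \<open>Positivity of Phi: it maps positive semidefinite matrices (forward light cone
  x0 \<ge> |xv|) to positive semidefinite matrices.\<close>

definition positive_map :: "real^3^3 \<Rightarrow> real^3 \<Rightarrow> bool" where
  "positive_map Lam t \<longleftrightarrow>
     (\<forall>x0 xv. norm xv \<le> x0 \<longrightarrow> norm (snd (PhiM Lam t (x0, xv))) \<le> fst (PhiM Lam t (x0, xv)))"

definition qform :: "real^3^3 \<Rightarrow> real^3 \<Rightarrow> real \<Rightarrow> mvec \<Rightarrow> real" where
  "qform Lam t w x = mink (PhiM Lam t x) (PhiM Lam t x) - w * mink x x"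

definition Qmat :: "real^3^3 \<Rightarrow> real^3 \<Rightarrow> real \<Rightarrow> mvec \<Rightarrow> mvec" where
  "Qmat Lam t w n =
     (let b = - (t v* Lam) in
      ((1 - (norm t)\<^sup>2 - w) * fst n + b \<bullet> snd n,
       fst n *\<^sub>R b + (w *\<^sub>R (mat 1 :: real^3^3) - transpose Lam ** Lam) *v snd n))"

definition eucl :: "mvec \<Rightarrow> mvec \<Rightarrow> real" where
  "eucl x y = fst x * fst y + snd x \<bullet> snd y"

definition Q_psd :: "real^3^3 \<Rightarrow> real^3 \<Rightarrow> real \<Rightarrow> bool" where
  "Q_psd Lam t w \<longleftrightarrow> (\<forall>x. eucl x (Qmat Lam t w x) \<ge> 0)"

definition Q_ker :: "real^3^3 \<Rightarrow> real^3 \<Rightarrow> real \<Rightarrow> mvec set" where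
  "Q_ker Lam t w = {n. Qmat Lam t w n = 0}"

definition Q_degenerate :: "real^3^3 \<Rightarrow> real^3 \<Rightarrow> real \<Rightarrow> bool" where
  "Q_degenerate Lam t w \<longleftrightarrow> Q_ker Lam t w \<noteq> {0}"

definition conc_pure :: "real^3^3 \<Rightarrow> real^3 \<Rightarrow> real^3 \<Rightarrow> real" where
  "conc_pure Lam t y = 2 * sqrt (Re (det (hmat (PhiM Lam t (1, y)))))"

definition decomp_values :: "real^3^3 \<Rightarrow> real^3 \<Rightarrow> real^3 \<Rightarrow> real set" where
  "decomp_values Lam t xv =
     {(\<Sum>j\<in>J. p j * conc_pure Lam t (y j)) | J p y.
        finite (J :: nat set) \<and> J \<noteq> {} \<and> (\<forall>j\<in>J. p j > 0 \<and> norm (y j) = 1) \<and>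
        sum p J = 1 \<and> (\<Sum>j\<in>J. p j *\<^sub>R y j) = xv}"

end

theory Submission
  imports Defs
begin

(*
  Write q_w(x) = B_w(x,x) for the symmetric bilinear form
  B_w(x,y) = Phi(x).Phi(y) - w x.y.  Since Q_w is the Gram matrix of B_w, "Q_w is
  positive semidefinite" means B_w >= 0 and ker Q_w is the radical of B_w; call w
  critical when B_w >= 0 and its radical contains a non-zero non-timelike vector.

  1. Symmetric bilinear forms on a real vector space (a locale): for semidefinite
     ones Cauchy-Schwarz holds, so sqrt q is a seminorm and isotropic vectors lie in
     the radical.  Then the Minkowski product, B_w and the translation from Q_w.
  2. Existence: positivity of Phi gives q_0 >= 0 on the light cone, which forces
     every ratio q_0(y)/y.y on spacelike y below every such ratio on timelike
     vectors.  For L the supremum of the spacelike ratios q_L is semidefinite, and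
     minimising q_L over the compact set of non-timelike unit vectors yields a
     non-timelike isotropic vector, hence a radical one: L is critical.
  3. Uniqueness: a semidefinite value is never below a critical value.
  4. Concurrence at a critical value w: pure states have concurrence sqrt q_w, so
     the triangle inequality bounds every decomposition from below by sqrt q_w;
     conversely moving a mixed state along the radical vector (which leaves q_w
     unchanged) reaches the light cone and splits it into two pure states
     attaining the bound.
*)

lemma opposite_sign_roots:
  fixes a b c :: real
  assumes ac: "a * c < 0"
  obtains r1 r2 where "r1 < 0" "0 < r2"
    "a * r1\<^sup>2 + 2 * b * r1 + c = 0" "a * r2\<^sup>2 + 2 * b * r2 + c = 0"
proof -
  define s where "s = sqrt (b\<^sup>2 - a * c)"
  have a0: "a \<noteq> 0" using ac by auto
  have "0 < b\<^sup>2 - a * c" using ac zero_le_power2[of b] by linarith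
  then have s2: "s\<^sup>2 = b\<^sup>2 - a * c" by (simp add: s_def)
  have "sqrt (b\<^sup>2) < s" unfolding s_def using ac by (intro real_sqrt_less_mono) simp
  then have bs: "\<bar>b\<bar> < s" by simp
  have root: "a * r\<^sup>2 + 2 * b * r + c = 0" if "a * r + b = s \<or> a * r + b = - s" for r
  proof -
    have "a * (a * r\<^sup>2 + 2 * b * r + c) = (a * r + b)\<^sup>2 - s\<^sup>2"
      using s2 by (simp add: power2_eq_square algebra_simps)
    also have "\<dots> = 0" using that by auto
    finally show ?thesis using a0 by simp
  qed
  define rp rm where "rp = (s - b) / a" and "rm = (- s - b) / a"
  have "a * rp + b = s" "a * rm + b = - s" using a0 by (simp_all add: rp_def rm_def)
  then have roots: "a * rp\<^sup>2 + 2 * b * rp + c = 0" "a * rm\<^sup>2 + 2 * b * rm + c = 0"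
    using root by auto
  have "0 < s - b" "- s - b < 0" using bs by linarith+
  then have "rm < 0 \<and> 0 < rp \<or> rp < 0 \<and> 0 < rm"
    using a0 by (cases "0 < a") (auto simp: rp_def rm_def divide_pos_pos divide_neg_pos
        divide_pos_neg divide_neg_neg)
  then show thesis using roots that by blast
qed

locale sym_bilinear =
  fixes B :: "'a::real_vector \<Rightarrow> 'a \<Rightarrow> real"
  assumes sym: "B x y = B y x"
    and add_left: "B (x + y) z = B x z + B y z"
    and scale_left: "B (c *\<^sub>R x) z = c * B x z"
begin

lemma add_right: "B z (x + y) = B z x + B z y"
  by (metis sym add_left)

lemma scale_right: "B z (c *\<^sub>R x) = c * B z x"
  by (metis sym scale_left)

lemma scale_both: "B (c *\<^sub>R x) (c *\<^sub>R x) = c\<^sup>2 * B x x"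
  by (simp add: scale_left scale_right power2_eq_square)

lemma expand: "B (a *\<^sub>R x + y) (a *\<^sub>R x + y) = a\<^sup>2 * B x x + 2 * a * B x y + B y y"
  by (simp add: add_left add_right scale_left scale_right sym[of y x] power2_eq_square
      algebra_simps)

lemma sqrt_scale: "0 \<le> c \<Longrightarrow> sqrt (B (c *\<^sub>R x) (c *\<^sub>R x)) = c * sqrt (B x x)"
  by (simp add: scale_both real_sqrt_mult)

lemma isotropic_combinations:
  assumes "B x x * B y y < 0"
  obtains r1 r2 where "r1 < 0" "0 < r2"
    "B (r1 *\<^sub>R x + y) (r1 *\<^sub>R x + y) = 0" "B (r2 *\<^sub>R x + y) (r2 *\<^sub>R x + y) = 0"
proof -
  obtain r1 r2 where r: "r1 < 0" "0 < r2" "B x x * r1\<^sup>2 + 2 * B x y * r1 + B y y = 0"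
    "B x x * r2\<^sup>2 + 2 * B x y * r2 + B y y = 0"
    using opposite_sign_roots[OF assms] by blast
  have "B (r *\<^sub>R x + y) (r *\<^sub>R x + y) = B x x * r\<^sup>2 + 2 * B x y * r + B y y" for r
    unfolding expand by (simp add: mult.commute mult.left_commute)
  then show thesis using that r by presburger
qed

end

locale psd_form = sym_bilinear +
  assumes nonneg: "0 \<le> B x x"
begin

lemma cauchy_schwarz: "\<bar>B x y\<bar> \<le> sqrt (B x x) * sqrt (B y y)"
proof -
  define a b c where "a = B x x" and "b = B x y" and "c = B y y"
  have quad: "0 \<le> a * s\<^sup>2 + 2 * s * b + c" for s
    using nonneg[of "s *\<^sub>R x + y"] expand[of s x y] by (simp add: a_def b_def c_def mult.commute)
  have "b\<^sup>2 \<le> a * c"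
  proof (cases "a = 0")
    case True
    have "b = 0"
    proof (rule ccontr)
      assume "b \<noteq> 0"
      then have "2 * (- (c + 1) / (2 * b)) * b + c = -1" by (simp add: field_simps)
      then show False using quad[of "- (c + 1) / (2 * b)"] True by simp
    qed
    then show ?thesis using True by simp
  next
    case False
    then have ap: "0 < a" using nonneg[of x] by (simp add: a_def)
    have "a * (- b / a)\<^sup>2 + 2 * (- b / a) * b + c = c - b\<^sup>2 / a"
      using ap by (simp add: power2_eq_square field_simps)
    then have "b\<^sup>2 / a \<le> c" using quad[of "- b / a"] by simp
    then show ?thesis using ap by (simp add: divide_le_eq mult.commute)
  qed
  then have "sqrt (b\<^sup>2) \<le> sqrt (a * c)" by (rule real_sqrt_le_mono)
  then show ?thesis by (simp add: real_sqrt_mult a_def b_def c_def)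
qed

lemma isotropic_radical: "B n n = 0 \<Longrightarrow> B n y = 0"
  using cauchy_schwarz[of n y] by simp

lemma triangle: "sqrt (B (x + y) (x + y)) \<le> sqrt (B x x) + sqrt (B y y)"
proof -
  have "B (x + y) (x + y) = B x x + 2 * B x y + B y y"
    using expand[of 1 x y] by simp
  also have "\<dots> \<le> B x x + 2 * (sqrt (B x x) * sqrt (B y y)) + B y y"
    using cauchy_schwarz[of x y] by simp
  also have "\<dots> = (sqrt (B x x) + sqrt (B y y))\<^sup>2"
    using nonneg[of x] nonneg[of y] by (simp add: power2_eq_square algebra_simps)
  finally show ?thesis
    using nonneg[of x] nonneg[of y] real_sqrt_le_mono by fastforce
qed

lemma triangle_sum:
  "finite J \<Longrightarrow> sqrt (B (\<Sum>j\<in>J. v j) (\<Sum>j\<in>J. v j)) \<le> (\<Sum>j\<in>J. sqrt (B (v j) (v j)))"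
proof (induction J rule: finite_induct)
  case empty
  then show ?case using scale_both[of 0 0] by simp
next
  case (insert j J)
  then show ?case
    using triangle[of "v j" "\<Sum>i\<in>J. v i"] by simp
qed

end

interpretation mink: sym_bilinear mink
  by unfold_locales (simp_all add: mink_def inner_commute inner_add_left algebra_simps)

lemma mink_self: "mink x x = (fst x)\<^sup>2 - (norm (snd x))\<^sup>2"
  by (simp add: mink_def power2_eq_square dot_square_norm)

lemma eucl_self_zero: "eucl z z = 0 \<Longrightarrow> z = 0"
  by (simp add: eucl_def prod_eq_iff add_nonneg_eq_0_iff)

lemma mink_nondegenerate: "(\<And>y. mink n y = 0) \<Longrightarrow> n = 0"
proof -
  assume "\<And>y. mink n y = 0"
  then have "mink n (fst n, - snd n) = 0" .
  then have "eucl n n = 0" by (simp add: mink_def eucl_def)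
  then show "n = 0" by (rule eucl_self_zero)
qed

lemma null_space_norm: "mink u u = 0 \<Longrightarrow> norm (snd u) = \<bar>fst u\<bar>"
  using power2_eq_iff_nonneg[of "norm (snd u)" "\<bar>fst u\<bar>"] by (simp add: mink_self)

lemma null_future_of_pairing:
  assumes nx: "norm xv \<le> 1" and null: "mink u u = 0" and pair: "0 < mink (1, xv) u"
  shows "0 < fst u"
proof (rule ccontr)
  assume "\<not> 0 < fst u"
  then have ns: "norm (snd u) = - fst u" using null_space_norm[OF null] by simp
  have "\<bar>xv \<bullet> snd u\<bar> \<le> norm xv * norm (snd u)" by (rule Cauchy_Schwarz_ineq2)
  also have "\<dots> \<le> norm (snd u)" using nx by (simp add: mult_left_le_one_le)
  finally have "fst u \<le> xv \<bullet> snd u" using ns by (simp add: abs_le_iff)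
  then have "mink (1, xv) u \<le> 0" by (simp add: mink_def)
  then show False using pair by simp
qed

lemma null_not_orthogonal:
  assumes nx: "norm xv < 1" and null: "mink u u = 0" and u0: "u \<noteq> 0"
  shows "mink (1, xv) u \<noteq> 0"
proof
  assume orth: "mink (1, xv) u = 0"
  have ns: "norm (snd u) = \<bar>fst u\<bar>" by (rule null_space_norm[OF null])
  then have "snd u \<noteq> 0" using u0 by (auto simp: prod_eq_iff)
  have "\<bar>xv \<bullet> snd u\<bar> \<le> norm xv * norm (snd u)" by (rule Cauchy_Schwarz_ineq2)
  also have "\<dots> < norm (snd u)"
    using nx \<open>snd u \<noteq> 0\<close> mult_strict_right_mono[of "norm xv" 1 "norm (snd u)"] by simp
  finally have "\<bar>xv \<bullet> snd u\<bar> < norm (snd u)" .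
  moreover have "fst u = xv \<bullet> snd u" using orth by (simp add: mink_def)
  ultimately show False using ns by simp
qed

lemma PhiM_add: "PhiM Lam t (x + y) = PhiM Lam t x + PhiM Lam t y"
  by (simp add: PhiM_def algebra_simps scaleR_add_left)

lemma PhiM_scale: "PhiM Lam t (c *\<^sub>R x) = c *\<^sub>R PhiM Lam t x"
  by (simp add: PhiM_def algebra_simps)

definition bform :: "real^3^3 \<Rightarrow> real^3 \<Rightarrow> real \<Rightarrow> mvec \<Rightarrow> mvec \<Rightarrow> real" where
  "bform Lam t w x y = mink (PhiM Lam t x) (PhiM Lam t y) - w * mink x y"

interpretation bform: sym_bilinear "bform Lam t w" for Lam t w
proof
  show "bform Lam t w x y = bform Lam t w y x" for x y
    by (simp add: bform_def mink.sym)
  show "bform Lam t w (x + y) z = bform Lam t w x z + bform Lam t w y z" for x y z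
    by (simp add: bform_def PhiM_add mink.add_left algebra_simps)
  show "bform Lam t w (c *\<^sub>R x) z = c * bform Lam t w x z" for c x z
    by (simp add: bform_def PhiM_scale mink.scale_left algebra_simps)
qed

lemma qform_bform: "qform Lam t w x = bform Lam t w x x"
  by (simp add: qform_def bform_def)

lemma bform_shift: "bform Lam t w x y = bform Lam t 0 x y - w * mink x y"
  by (simp add: bform_def)

lemma eucl_Qmat: "eucl y (Qmat Lam t w x) = bform Lam t w x y"
proof -
  have vLam: "v \<bullet> (t v* Lam) = t \<bullet> (Lam *v v)" for v
    by (metis dot_lmul_matrix inner_commute)
  have gram: "v \<bullet> ((transpose Lam ** Lam) *v u) = (Lam *v u) \<bullet> (Lam *v v)" for u v
    by (metis dot_lmul_matrix inner_commute matrix_vector_mul_assoc transpose_matrix_vector)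
  have "(w *\<^sub>R (mat 1 :: real^3^3)) *v u = w *\<^sub>R u" for u
    by (metis scaleR_matrix_vector_assoc matrix_vector_mul_lid)
  then have "snd y \<bullet> ((w *\<^sub>R (mat 1 :: real^3^3) - transpose Lam ** Lam) *v snd x)
      = w * (snd y \<bullet> snd x) - (Lam *v snd x) \<bullet> (Lam *v snd y)"
    by (simp add: gram matrix_vector_mult_diff_rdistrib inner_diff_right)
  then show ?thesis
    unfolding eucl_def Qmat_def bform_def mink_def PhiM_def Let_def
    by (simp add: vLam inner_add_left inner_add_right algebra_simps power2_norm_eq_inner
        inner_commute)
qed

lemma Q_psd_iff: "Q_psd Lam t w \<longleftrightarrow> psd_form (bform Lam t w)"
  unfolding Q_psd_def eucl_Qmat psd_form_def psd_form_axioms_def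
  using bform.sym_bilinear_axioms by blast

lemma Q_ker_iff: "n \<in> Q_ker Lam t w \<longleftrightarrow> (\<forall>y. bform Lam t w n y = 0)"
proof
  assume "n \<in> Q_ker Lam t w"
  then have "Qmat Lam t w n = 0" by (simp add: Q_ker_def)
  then show "\<forall>y. bform Lam t w n y = 0"
    using eucl_Qmat[of _ Lam t w n] by (simp add: eucl_def)
next
  assume "\<forall>y. bform Lam t w n y = 0"
  then have "eucl (Qmat Lam t w n) (Qmat Lam t w n) = 0"
    by (simp only: eucl_Qmat)
  then show "n \<in> Q_ker Lam t w" by (simp add: Q_ker_def eucl_self_zero)
qed

definition critical_value :: "real^3^3 \<Rightarrow> real^3 \<Rightarrow> real \<Rightarrow> bool" where
  "critical_value Lam t w \<longleftrightarrow> psd_form (bform Lam t w) \<and>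
     (\<exists>n. n \<noteq> 0 \<and> mink n n \<le> 0 \<and> (\<forall>y. bform Lam t w n y = 0))"

lemma critical_value_iff_Q:
  "critical_value Lam t w \<longleftrightarrow> Q_psd Lam t w \<and> Q_degenerate Lam t w \<and>
     (\<exists>n\<in>Q_ker Lam t w. n \<noteq> 0 \<and> mink n n \<le> 0)"
  unfolding critical_value_def Q_degenerate_def Q_psd_iff Q_ker_iff[symmetric] by blast

lemma positive_map_cone:
  assumes pm: "positive_map Lam t" and cone: "0 \<le> mink z z"
  shows "0 \<le> bform Lam t 0 z z"
proof -
  have pos: "norm (snd (PhiM Lam t u)) \<le> fst (PhiM Lam t u)" if "norm (snd u) \<le> fst u" for u
    using pm that unfolding positive_map_def by (metis prod.collapse)
  have "norm (snd z) \<le> \<bar>fst z\<bar>"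
    using cone abs_le_square_iff[of "norm (snd z)" "fst z"] by (simp add: mink_self)
  then have "norm (snd z) \<le> fst z \<or> norm (snd (- z)) \<le> fst (- z)"
    by (cases "0 \<le> fst z") auto
  then have "norm (snd (PhiM Lam t z)) \<le> \<bar>fst (PhiM Lam t z)\<bar>"
    using pos[of z] pos[of "- z"] PhiM_scale[of Lam t "-1" z] by force
  then show ?thesis
    using abs_le_square_iff[of "norm (snd (PhiM Lam t z))" "fst (PhiM Lam t z)"]
    by (simp add: bform_def mink_self)
qed

lemma ratio_separation:
  assumes pm: "positive_map Lam t" and gx: "0 < mink x x" and gy: "mink y y < 0"
  shows "bform Lam t 0 y y / mink y y \<le> bform Lam t 0 x x / mink x x"
proof (rule ccontr)
  assume "\<not> ?thesis"
  then obtain c where cx: "bform Lam t 0 x x / mink x x < c"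
    and cy: "c < bform Lam t 0 y y / mink y y"
    using dense not_le by blast
  have qx: "bform Lam t c x x < 0" using cx gx by (simp add: bform_shift[of _ _ c] divide_less_eq)
  have qy: "bform Lam t c y y < 0" using cy gy by (simp add: bform_shift[of _ _ c] less_divide_eq)
  have cone_nonneg: "0 \<le> bform Lam t c (r *\<^sub>R x + y) (r *\<^sub>R x + y)"
    if "mink (r *\<^sub>R x + y) (r *\<^sub>R x + y) = 0" for r
    using positive_map_cone[OF pm] that by (simp add: bform_shift[of _ _ c])
  have negative: "bform Lam t c (r *\<^sub>R x + y) (r *\<^sub>R x + y) < 0"
    if "r * bform Lam t c x y \<le> 0" for r
  proof -
    have "r\<^sup>2 * bform Lam t c x x \<le> 0" using qx by (simp add: mult_nonneg_nonpos)
    then show ?thesis using that qy by (simp add: bform.expand)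
  qed
  obtain r1 r2 where "r1 < 0" "0 < r2" "mink (r1 *\<^sub>R x + y) (r1 *\<^sub>R x + y) = 0"
    "mink (r2 *\<^sub>R x + y) (r2 *\<^sub>R x + y) = 0"
    using mink.isotropic_combinations gx gy by (metis mult_pos_neg)
  then show False
  proof (cases "bform Lam t c x y \<le> 0")
    case True
    then have "r2 * bform Lam t c x y \<le> 0" using \<open>0 < r2\<close> by (simp add: mult_nonneg_nonpos)
    then show False using negative cone_nonneg \<open>mink (r2 *\<^sub>R x + y) _ = 0\<close> by fastforce
  next
    case False
    then have "r1 * bform Lam t c x y \<le> 0" using \<open>r1 < 0\<close> by (simp add: mult_nonpos_nonneg)
    then show False using negative cone_nonneg \<open>mink (r1 *\<^sub>R x + y) _ = 0\<close> by fastforce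
  qed
qed

(* The ratios of q_0 to the Minkowski norm over spacelike vectors; their supremum
   will be the critical value w0. *)
definition spacelike_ratios :: "real^3^3 \<Rightarrow> real^3 \<Rightarrow> real set" where
  "spacelike_ratios Lam t = {bform Lam t 0 y y / mink y y | y. mink y y < 0}"

lemma spacelike_ratios_bounded:
  assumes pm: "positive_map Lam t"
  shows "spacelike_ratios Lam t \<noteq> {}" and "bdd_above (spacelike_ratios Lam t)"
proof -
  have "mink (0, axis 1 1) (0, axis 1 1) < 0" by (simp add: mink_def inner_axis_axis)
  then show "spacelike_ratios Lam t \<noteq> {}" unfolding spacelike_ratios_def by blast
  have "mink (1, 0) (1, 0) > 0" by (simp add: mink_def)
  then show "bdd_above (spacelike_ratios Lam t)"
    unfolding spacelike_ratios_def using ratio_separation[OF pm] by (intro bdd_aboveI) blast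
qed

lemma psd_at_sup:
  assumes pm: "positive_map Lam t"
  shows "psd_form (bform Lam t (Sup (spacelike_ratios Lam t)))"
proof (unfold_locales)
  fix z
  define L where "L = Sup (spacelike_ratios Lam t)"
  note bounded = spacelike_ratios_bounded[OF pm]
  have "L * mink z z \<le> bform Lam t 0 z z"
  proof (cases "mink z z" "0::real" rule: linorder_cases)
    case less
    then have "bform Lam t 0 z z / mink z z \<in> spacelike_ratios Lam t"
      unfolding spacelike_ratios_def by blast
    then have "bform Lam t 0 z z / mink z z \<le> L"
      unfolding L_def using bounded by (intro cSup_upper)
    then show ?thesis using less by (simp add: divide_le_eq)
  next
    case equal
    then show ?thesis using positive_map_cone[OF pm, of z] by simp
  next
    case greater
    have "L \<le> bform Lam t 0 z z / mink z z"
      unfolding L_def using bounded ratio_separation[OF pm greater]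
      by (intro cSup_least) (auto simp: spacelike_ratios_def)
    then show ?thesis using greater by (simp add: le_divide_eq)
  qed
  then show "0 \<le> bform Lam t (Sup (spacelike_ratios Lam t)) z z"
    using bform_shift[of Lam t L z z] by (simp add: L_def)
qed

lemma continuous_bform: "continuous_on UNIV (\<lambda>y. bform Lam t w y y)"
proof -
  have "continuous_on UNIV (\<lambda>y::mvec. Lam *v snd y)"
    by (rule bounded_linear.continuous_on[OF matrix_vector_mul_bounded_linear])
      (intro continuous_intros)
  then show ?thesis
    unfolding bform_def mink_def PhiM_def fst_conv snd_conv by (intro continuous_intros)
qed

(* If q_L >= m >= 0 on all non-timelike unit vectors, then every spacelike ratio is
   at most L - m (both q_0 and y.y are homogeneous of degree two). *)
lemma ratio_below_of_min:
  assumes min: "\<And>u. norm u = 1 \<Longrightarrow> mink u u \<le> 0 \<Longrightarrow> m \<le> bform Lam t L u u"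
    and m0: "0 \<le> m" and gy: "mink y y < 0"
  shows "bform Lam t 0 y y / mink y y \<le> L - m"
proof -
  have ny: "0 < norm y" using gy by (auto simp: mink_def)
  define u where "u = (1 / norm y) *\<^sub>R y"
  have yu: "y = norm y *\<^sub>R u" using ny by (simp add: u_def)
  have qy: "bform Lam t 0 y y = (norm y)\<^sup>2 * bform Lam t 0 u u"
    using bform.scale_both[of Lam t 0 "norm y" u] by (simp only: yu[symmetric])
  have gyu: "mink y y = (norm y)\<^sup>2 * mink u u"
    using mink.scale_both[of "norm y" u] by (simp only: yu[symmetric])
  then have gu: "mink u u < 0" using gy by (simp add: mult_less_0_iff)
  have nu: "norm u = 1" using ny by (simp add: u_def)
  then have "(fst u)\<^sup>2 + (norm (snd u))\<^sup>2 = 1" by (simp add: norm_prod_def)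
  then have "- 1 \<le> mink u u"
    unfolding mink_self using zero_le_power2[of "fst u"] by linarith
  then have "- (m * mink u u) \<le> m" using mult_left_mono[of "- mink u u" 1 m] m0 by simp
  moreover have "m \<le> bform Lam t L u u" using min[OF nu] gu by simp
  ultimately have "(L - m) * mink u u \<le> bform Lam t 0 u u"
    unfolding left_diff_distrib using bform_shift[of Lam t L u u] by linarith
  then have "bform Lam t 0 u u / mink u u \<le> L - m" using gu by (simp add: divide_le_eq)
  then show ?thesis using qy gyu ny by simp
qed

(* Minimising q_L over the compact set of non-timelike unit vectors yields a
   non-timelike isotropic vector: a positive minimum m would push every spacelike
   ratio below L - m. *)
lemma isotropic_at_sup:
  assumes pm: "positive_map Lam t"
  obtains n where "n \<noteq> 0" "mink n n \<le> 0" "bform Lam t (Sup (spacelike_ratios Lam t)) n n = 0"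
proof -
  define L where "L = Sup (spacelike_ratios Lam t)"
  define K where "K = sphere (0::mvec) 1 \<inter> {y. mink y y \<le> 0}"
  have "continuous_on UNIV (\<lambda>y::mvec. mink y y)"
    unfolding mink_def by (intro continuous_intros)
  then have "closed {y::mvec. mink y y \<le> 0}"
    using closed_Collect_le continuous_on_const by blast
  then have "compact K"
    unfolding K_def by (rule compact_Int_closed[OF compact_sphere])
  moreover have "(0, axis 1 1) \<in> K"
    by (simp add: K_def mink_def inner_axis_axis norm_Pair)
  then have "K \<noteq> {}" by blast
  moreover have "continuous_on K (\<lambda>y. bform Lam t L y y)"
    using continuous_bform by (rule continuous_on_subset) simp
  ultimately have "\<exists>n\<in>K. \<forall>y\<in>K. bform Lam t L n n \<le> bform Lam t L y y"
    by (rule continuous_attains_inf)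
  then obtain n where nK: "n \<in> K" and nmin: "\<And>y. y \<in> K \<Longrightarrow> bform Lam t L n n \<le> bform Lam t L y y"
    by blast
  have "bform Lam t L n n \<le> 0"
  proof (rule ccontr)
    define m where "m = bform Lam t L n n"
    assume "\<not> bform Lam t L n n \<le> 0"
    then have m0: "0 < m" by (simp add: m_def)
    have "s \<le> L - m" if "s \<in> spacelike_ratios Lam t" for s
      using that nmin m0 unfolding spacelike_ratios_def K_def m_def
      by (auto intro!: ratio_below_of_min)
    then have "L \<le> L - m"
      unfolding L_def using spacelike_ratios_bounded[OF pm] by (intro cSup_least) auto
    then show False using m0 by simp
  qed
  moreover have "0 \<le> bform Lam t L n n"
    using psd_form.nonneg[OF psd_at_sup[OF pm]] by (simp add: L_def)
  moreover have "n \<noteq> 0" "mink n n \<le> 0" using nK by (auto simp: K_def)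
  ultimately show thesis using that by (simp add: L_def)
qed

lemma critical_value_exists:
  assumes pm: "positive_map Lam t"
  shows "critical_value Lam t (Sup (spacelike_ratios Lam t))"
proof -
  note psd = psd_at_sup[OF pm]
  obtain n where "n \<noteq> 0" "mink n n \<le> 0" "bform Lam t (Sup (spacelike_ratios Lam t)) n n = 0"
    by (rule isotropic_at_sup[OF pm])
  then show ?thesis
    unfolding critical_value_def using psd psd_form.isotropic_radical[OF psd] by blast
qed

lemma critical_value_below_psd:
  assumes psd: "psd_form (bform Lam t w1)" and rad: "\<And>y. bform Lam t w2 n y = 0"
    and n0: "n \<noteq> 0" and nt: "mink n n \<le> 0"
  shows "w2 \<le> w1"
proof (rule ccontr)
  assume "\<not> w2 \<le> w1"
  then have w12: "0 < w2 - w1" by simp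
  have shift: "bform Lam t w1 n y = (w2 - w1) * mink n y" for y
    unfolding left_diff_distrib
    using rad[of y] bform_shift[of Lam t w1 n y] bform_shift[of Lam t w2 n y]
    by linarith
  have "0 \<le> (w2 - w1) * mink n n" using psd_form.nonneg[OF psd, of n] shift[of n] by simp
  then have "mink n n = 0" using nt w12 by (simp add: zero_le_mult_iff)
  then have "bform Lam t w1 n n = 0" using shift[of n] by simp
  then have "bform Lam t w1 n y = 0" for y by (rule psd_form.isotropic_radical[OF psd])
  then have "mink n y = 0" for y using shift[of y] w12 by simp
  then have "n = 0" by (rule mink_nondegenerate)
  then show False using n0 by simp
qed

lemma critical_value_unique:
  assumes "critical_value Lam t w1" and "critical_value Lam t w2"
  shows "w1 = w2"
proof -
  have "w2 \<le> w1" if crit: "critical_value Lam t w1" "critical_value Lam t w2" for w1 w2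
  proof -
    have psd: "psd_form (bform Lam t w1)" using crit(1) unfolding critical_value_def by blast
    obtain n where kernel: "n \<noteq> 0" "mink n n \<le> 0" "\<And>y. bform Lam t w2 n y = 0"
      using crit(2) unfolding critical_value_def by blast
    show ?thesis by (rule critical_value_below_psd[OF psd kernel(3,1,2)])
  qed
  then show ?thesis using assms by (meson order_antisym)
qed

lemma det_hmat: "Re (det (hmat z)) = mink z z / 4"
proof -
  have "snd z \<bullet> snd z = (snd z $ 1)\<^sup>2 + (snd z $ 2)\<^sup>2 + (snd z $ 3)\<^sup>2"
    by (simp add: inner_vec_def sum_3 power2_eq_square)
  then show ?thesis
    unfolding det_2 hmat_def sigma1_def sigma2_def sigma3_def mink_def
    by (simp add: mat_def power2_eq_square algebra_simps)
qed

(* For a pure state the concurrence is sqrt q_w, whatever w: its vector (1, y) is null. *)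
lemma conc_pure_eq:
  assumes "norm y = 1"
  shows "conc_pure Lam t y = sqrt (bform Lam t w (1, y) (1, y))"
proof -
  have "mink (1, y) (1, y) = 0" using assms by (simp add: mink_self)
  then show ?thesis
    by (simp add: conc_pure_def det_hmat bform_def real_sqrt_divide)
qed

(* Future-directed null vectors are the positive multiples of pure states. *)
definition future_null :: "mvec \<Rightarrow> bool" where
  "future_null z \<longleftrightarrow> mink z z = 0 \<and> 0 < fst z"

lemma future_null_scale: "future_null z \<Longrightarrow> 0 < c \<Longrightarrow> future_null (c *\<^sub>R z)"
  by (simp add: future_null_def mink.scale_both)

lemma future_null_pure:
  assumes "future_null z"
  shows "norm ((1 / fst z) *\<^sub>R snd z) = 1"
    and "fst z * conc_pure Lam t ((1 / fst z) *\<^sub>R snd z) = sqrt (bform Lam t w z z)"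
proof -
  define y where "y = (1 / fst z) *\<^sub>R snd z"
  have pos: "0 < fst z" and "norm (snd z) = fst z"
    using assms null_space_norm[of z] by (auto simp: future_null_def)
  then show ny: "norm ((1 / fst z) *\<^sub>R snd z) = 1" by simp
  have "z = fst z *\<^sub>R (1, y)" using pos by (simp add: y_def prod_eq_iff)
  then have "sqrt (bform Lam t w z z) = fst z * sqrt (bform Lam t w (1, y) (1, y))"
    using bform.sqrt_scale[of "fst z" Lam t w "(1, y)"] pos by simp
  then show "fst z * conc_pure Lam t ((1 / fst z) *\<^sub>R snd z) = sqrt (bform Lam t w z z)"
    using conc_pure_eq[OF ny] by (simp add: y_def)
qed

lemma decomp_of_future_null:
  fixes J :: "nat set"
  assumes J: "finite J" "J \<noteq> {}" and null: "\<And>j. j \<in> J \<Longrightarrow> future_null (z j)"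
    and sum: "(\<Sum>j\<in>J. z j) = (1, xv)"
  shows "(\<Sum>j\<in>J. sqrt (bform Lam t w (z j) (z j))) \<in> decomp_values Lam t xv"
proof -
  define p y where "p j = fst (z j)" and "y j = (1 / fst (z j)) *\<^sub>R snd (z j)" for j
  have "0 < p j \<and> norm (y j) = 1" if "j \<in> J" for j
    using null[OF that] future_null_pure(1)[OF null[OF that]]
    by (simp add: p_def y_def future_null_def)
  then have pos: "\<forall>j\<in>J. 0 < p j \<and> norm (y j) = 1" by blast
  have "sum p J = 1" using arg_cong[OF sum, of fst] by (simp add: p_def fst_sum)
  moreover have "(\<Sum>j\<in>J. p j *\<^sub>R y j) = xv"
    using arg_cong[OF sum, of snd] pos by (simp add: p_def y_def snd_sum)
  moreover have "(\<Sum>j\<in>J. sqrt (bform Lam t w (z j) (z j))) = (\<Sum>j\<in>J. p j * conc_pure Lam t (y j))"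
    using null future_null_pure(2) by (simp add: p_def y_def)
  ultimately show ?thesis
    unfolding decomp_values_def mem_Collect_eq using J pos
    by (intro exI[of _ J] exI[of _ p] exI[of _ y]) simp
qed

(* Lower bound: by the triangle inequality for sqrt q_w, no decomposition beats
   sqrt q_w(1, xv) once q_w is semidefinite. *)
lemma conc_lower_bound:
  assumes psd: "psd_form (bform Lam t w)" and c: "c \<in> decomp_values Lam t xv"
  shows "sqrt (bform Lam t w (1, xv) (1, xv)) \<le> c"
proof -
  obtain J p y where c_eq: "c = (\<Sum>j\<in>J. p j * conc_pure Lam t (y j))" and fin: "finite (J :: nat set)"
    and py: "\<forall>j\<in>J. 0 < p j \<and> norm (y j) = 1" and sp: "sum p J = 1"
    and sy: "(\<Sum>j\<in>J. p j *\<^sub>R y j) = xv"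
    using c unfolding decomp_values_def by blast
  define v where "v j = p j *\<^sub>R ((1::real), y j)" for j
  have "(\<Sum>j\<in>J. v j) = (1, xv)"
    using sp sy by (simp add: v_def prod_eq_iff fst_sum snd_sum)
  moreover have "p j * conc_pure Lam t (y j) = sqrt (bform Lam t w (v j) (v j))" if "j \<in> J" for j
  proof -
    have "0 < p j" "norm (y j) = 1" using py that by auto
    then show ?thesis
      using conc_pure_eq[of "y j" Lam t w] bform.sqrt_scale[of "p j" Lam t w "(1, y j)"]
      by (simp add: v_def)
  qed
  ultimately show ?thesis
    using psd_form.triangle_sum[OF psd fin, of v] c_eq by simp
qed

lemma future_null_on_line:
  assumes nx: "norm xv < 1" and nt: "mink n n \<le> 0"
    and null: "mink (r *\<^sub>R n + (1, xv)) (r *\<^sub>R n + (1, xv)) = 0"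
  shows "future_null (r *\<^sub>R n + (1, xv))"
proof -
  define x where "x = (1::real, xv)"
  have gx: "0 < mink x x"
    using nx by (simp add: x_def mink_self abs_square_less_1)
  have "r\<^sup>2 * mink n n + 2 * r * mink n x + mink x x = 0"
    using null mink.expand[of r n x] by (simp add: x_def)
  moreover have "r\<^sup>2 * mink n n \<le> 0" using nt by (simp add: mult_nonneg_nonpos)
  moreover have "mink x (r *\<^sub>R n + x) = r * mink n x + mink x x"
    by (simp add: mink.add_right mink.scale_right mink.sym[of x n])
  ultimately have "0 < mink x (r *\<^sub>R n + x)" using gx by linarith
  then have "0 < fst (r *\<^sub>R n + x)"
    using null_future_of_pairing[of xv "r *\<^sub>R n + x"] nx null by (simp add: x_def)
  then show ?thesis using null by (simp add: future_null_def x_def)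
qed

lemma bform_radical_shift:
  assumes rad: "\<And>y. bform Lam t w n y = 0"
  shows "bform Lam t w (r *\<^sub>R n + x) (r *\<^sub>R n + x) = bform Lam t w x x"
  using rad[of n] rad[of x] by (simp add: bform.expand)

(* Kernel vector timelike: the line through x = (1, xv) along n meets the light cone
   on both sides of x, and x is a convex combination of the two meeting points, at
   both of which q_w equals q_w(x). *)
lemma split_timelike_kernel:
  assumes rad: "\<And>y. bform Lam t w n y = 0" and nt: "mink n n < 0" and nx: "norm xv < 1"
  obtains z1 z2 where "future_null z1" "future_null z2" "z1 + z2 = (1, xv)"
    "sqrt (bform Lam t w z1 z1) + sqrt (bform Lam t w z2 z2) = sqrt (bform Lam t w (1, xv) (1, xv))"
proof -
  define x where "x = (1::real, xv)"
  have "0 < mink x x" using nx by (simp add: x_def mink_self abs_square_less_1)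
  then have "mink n n * mink x x < 0" using nt by (simp add: mult_neg_pos)
  then obtain r1 r2 where r: "r1 < 0" "0 < r2"
    and null: "mink (r1 *\<^sub>R n + x) (r1 *\<^sub>R n + x) = 0" "mink (r2 *\<^sub>R n + x) (r2 *\<^sub>R n + x) = 0"
    by (rule mink.isotropic_combinations)
  have fut: "future_null (r1 *\<^sub>R n + x)" "future_null (r2 *\<^sub>R n + x)"
    using future_null_on_line[OF nx less_imp_le[OF nt]] null by (simp_all add: x_def)
  define l where "l = r2 / (r2 - r1)"
  have l: "0 < l" "0 < 1 - l" "l * r1 + (1 - l) * r2 = 0"
    using r by (simp_all add: l_def field_simps)
  define z1 z2 where "z1 = l *\<^sub>R (r1 *\<^sub>R n + x)" and "z2 = (1 - l) *\<^sub>R (r2 *\<^sub>R n + x)"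
  have "z1 + z2 = (l * r1 + (1 - l) * r2) *\<^sub>R n + x"
    by (simp add: z1_def z2_def algebra_simps)
  then have "z1 + z2 = x" using l by simp
  moreover have "sqrt (bform Lam t w z1 z1) = l * sqrt (bform Lam t w x x)"
    unfolding z1_def using l by (simp add: bform.sqrt_scale bform_radical_shift[OF rad])
  moreover have "sqrt (bform Lam t w z2 z2) = (1 - l) * sqrt (bform Lam t w x x)"
    unfolding z2_def using l by (simp add: bform.sqrt_scale bform_radical_shift[OF rad])
  moreover have "future_null z1" "future_null z2"
    using fut l by (simp_all add: z1_def z2_def future_null_scale)
  ultimately show thesis using that by (simp add: x_def algebra_simps)
qed

(* Kernel vector null: n is not orthogonal to x = (1, xv), so the line through x
   along n meets the light cone at one further point z1, and x = z1 + (x - z1)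
   with x - z1 a future null multiple of n carrying no weight under q_w. *)
lemma split_null_kernel:
  assumes rad: "\<And>y. bform Lam t w n y = 0" and null: "mink n n = 0" and n0: "n \<noteq> 0"
    and nx: "norm xv < 1"
  obtains z1 z2 where "future_null z1" "future_null z2" "z1 + z2 = (1, xv)"
    "sqrt (bform Lam t w z1 z1) + sqrt (bform Lam t w z2 z2) = sqrt (bform Lam t w (1, xv) (1, xv))"
proof -
  define x where "x = (1::real, xv)"
  have gx: "0 < mink x x" using nx by (simp add: x_def mink_self abs_square_less_1)
  define M where "M = mink x n"
  have M0: "M \<noteq> 0" using null_not_orthogonal[OF nx null n0] by (simp add: M_def x_def)
  define s where "s = - mink x x / (2 * M)"
  define z1 z2 where "z1 = s *\<^sub>R n + x" and "z2 = (- s) *\<^sub>R n"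
  have "mink z1 z1 = 0"
    using mink.expand[of s n x] null M0 by (simp add: z1_def s_def M_def mink.sym[of n x])
  then have f1: "future_null z1"
    unfolding z1_def x_def using future_null_on_line[OF nx] null by simp
  have g2: "mink z2 z2 = 0" unfolding z2_def mink.scale_both using null by simp
  have "mink x z2 = mink x x / 2"
    using M0 by (simp add: z2_def mink.scale_right s_def M_def)
  then have "0 < mink (1, xv) z2" using gx by (simp add: x_def)
  then have "0 < fst z2" using null_future_of_pairing[of xv z2] nx g2 by simp
  then have f2: "future_null z2" using g2 by (simp add: future_null_def)
  have "z1 + z2 = x" by (simp add: z1_def z2_def)
  moreover have "bform Lam t w z2 z2 = 0" unfolding z2_def bform.scale_both using rad[of n] by simp
  moreover have "bform Lam t w z1 z1 = bform Lam t w x x"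
    by (simp add: z1_def bform_radical_shift[OF rad])
  ultimately show thesis using that f1 f2 by (simp add: x_def)
qed

lemma split_along_kernel:
  assumes rad: "\<And>y. bform Lam t w n y = 0" and n0: "n \<noteq> 0" and nt: "mink n n \<le> 0"
    and nx: "norm xv < 1"
  obtains z1 z2 where "future_null z1" "future_null z2" "z1 + z2 = (1, xv)"
    "sqrt (bform Lam t w z1 z1) + sqrt (bform Lam t w z2 z2) = sqrt (bform Lam t w (1, xv) (1, xv))"
proof (cases "mink n n = 0")
  case True
  from split_null_kernel[OF rad True n0 nx] that show thesis .
next
  case False
  then have "mink n n < 0" using nt by simp
  from split_timelike_kernel[OF rad this nx] that show thesis .
qed

lemma conc_upper_bound:
  assumes rad: "\<And>y. bform Lam t w n y = 0" and n0: "n \<noteq> 0" and nt: "mink n n \<le> 0"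
    and nx: "norm xv \<le> 1"
  shows "sqrt (bform Lam t w (1, xv) (1, xv)) \<in> decomp_values Lam t xv"
proof (cases "norm xv = 1")
  case True
  then have "future_null (1, xv)" by (simp add: future_null_def mink_self)
  then show ?thesis using decomp_of_future_null[of "{0}" "\<lambda>_. (1, xv)"] by simp
next
  case False
  then have "norm xv < 1" using nx by simp
  then obtain z1 z2 where fut: "future_null z1" "future_null z2" and sum: "z1 + z2 = (1, xv)"
    and sq: "sqrt (bform Lam t w z1 z1) + sqrt (bform Lam t w z2 z2) = sqrt (bform Lam t w (1, xv) (1, xv))"
    by (rule split_along_kernel[OF rad n0 nt])
  define z where "z j = (if j = 0 then z1 else z2)" for j :: nat
  have "(\<Sum>j\<in>{0, 1}. sqrt (bform Lam t w (z j) (z j))) \<in> decomp_values Lam t xv"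
    using fut sum by (intro decomp_of_future_null) (auto simp: z_def)
  then show ?thesis using sq by (simp add: z_def)
qed

lemma critical_value_concurrence:
  assumes crit: "critical_value Lam t w" and nx: "norm xv \<le> 1"
  shows "sqrt (qform Lam t w (1, xv)) \<in> decomp_values Lam t xv"
    and "\<forall>c\<in>decomp_values Lam t xv. sqrt (qform Lam t w (1, xv)) \<le> c"
proof -
  obtain n where psd: "psd_form (bform Lam t w)"
    and kernel: "n \<noteq> 0" "mink n n \<le> 0" "\<And>y. bform Lam t w n y = 0"
    using crit unfolding critical_value_def by blast
  show "sqrt (qform Lam t w (1, xv)) \<in> decomp_values Lam t xv"
    using conc_upper_bound[OF kernel(3,1,2) nx] by (simp add: qform_bform)
  show "\<forall>c\<in>decomp_values Lam t xv. sqrt (qform Lam t w (1, xv)) \<le> c"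
    using conc_lower_bound[OF psd] by (simp add: qform_bform)
qed

theorem theorem3:
  fixes Lam :: "real^3^3" and t :: "real^3"
  assumes "positive_map Lam t"
  shows "(\<exists>!w0. Q_psd Lam t w0 \<and> Q_degenerate Lam t w0 \<and>
                 (\<exists>n\<in>Q_ker Lam t w0. n \<noteq> 0 \<and> mink n n \<le> 0))
       \<and> (\<forall>w0. Q_psd Lam t w0 \<and> Q_degenerate Lam t w0 \<and>
                 (\<exists>n\<in>Q_ker Lam t w0. n \<noteq> 0 \<and> mink n n \<le> 0) \<longrightarrow>
            (\<forall>xv::real^3. norm xv \<le> 1 \<longrightarrow>
               sqrt (qform Lam t w0 (1, xv)) \<in> decomp_values Lam t xv \<and>
               (\<forall>c\<in>decomp_values Lam t xv. sqrt (qform Lam t w0 (1, xv)) \<le> c)))"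
proof -
  have "\<exists>!w0. critical_value Lam t w0"
    using critical_value_exists[OF assms] critical_value_unique by blast
  then show ?thesis
    using critical_value_concurrence unfolding critical_value_iff_Q by blast
qed

end
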